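(* Let $\mathbb F$ be a field, $n\ge1$, and for $X,Y\in\mathbb F^{n\times n}$ define the $5n\times5n$ block matrices (with $n\times n$ blocks) $$J=\begin{bmatrix}0&I_n&0&0&0\\0&0&I_n&0&0\\0&0&0&I_n&0\\0&0&0&0&0\\0&0&0&0&0\end{bmatrix},\qquad K_{XY}=\begin{bmatrix}0&0&X&0&Y\\0&0&0&X&0\\0&0&0&0&0\\0&0&0&0&0\\0&0&0&I_n&0\end{bmatrix}.$$ Then $J$ and $K_{XY}$ are nilpotent and commute, and for all $X,Y,X',Y'\in\mathbb F^{n\times n}$: the pairs $(X,Y)$ and $(X',Y')$ are similar if and only if the pairs $(J,K_{XY})$ and $(J,K_{X'Y'})$ are similar.
   Context: Two pairs $(M,N)$, $(M',N')$ of square matrices of the same size are similar if $(S^{-1}MS,S^{-1}NS)=(M',N')$ for some nonsingular $S$. *)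

theory Defs
  imports "Jordan_Normal_Form.Matrix"
begin

text \<open>Block matrix with 5x5 blocks of size n x n: block (p,q) is B p q (p,q < 5).\<close>
definition block5 :: "nat \<Rightarrow> (nat \<Rightarrow> nat \<Rightarrow> 'a :: zero mat) \<Rightarrow> 'a mat" where
  "block5 n B = mat (5*n) (5*n) (\<lambda>(i,j). B (i div n) (j div n) $$ (i mod n, j mod n))"

definition Jmat :: "nat \<Rightarrow> 'a :: {zero,one} mat" where
  "Jmat n = block5 n (\<lambda>p q. if (p,q) \<in> {(0,1),(1,2),(2,3)} then 1\<^sub>m n else 0\<^sub>m n n)"

definition Kmat :: "nat \<Rightarrow> 'a :: {zero,one} mat \<Rightarrow> 'a mat \<Rightarrow> 'a mat" where
  "Kmat n X Y = block5 n (\<lambda>p q.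
     if (p,q) = (0,2) then X else
     if (p,q) = (0,4) then Y else
     if (p,q) = (1,3) then X else
     if (p,q) = (4,3) then 1\<^sub>m n else 0\<^sub>m n n)"

definition similar_pair :: "nat \<Rightarrow> 'a :: semiring_1 mat \<Rightarrow> 'a mat \<Rightarrow> 'a mat \<Rightarrow> 'a mat \<Rightarrow> bool" where
  "similar_pair m M N M' N' \<longleftrightarrow> (\<exists>S T. S \<in> carrier_mat m m \<and> T \<in> carrier_mat m m \<and>
      S * T = 1\<^sub>m m \<and> T * S = 1\<^sub>m m \<and> T * M * S = M' \<and> T * N * S = N')"

definition nilpotent_mat :: "'a :: semiring_1 mat \<Rightarrow> bool" where
  "nilpotent_mat A \<longleftrightarrow> (\<exists>k. A ^\<^sub>m k = 0\<^sub>m (dim_row A) (dim_col A))"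

end

theory Submission
  imports Defs
begin

text \<open>
  A similarity \<open>S\<close> between \<open>(X, Y)\<close> and \<open>(X', Y')\<close> yields the block-diagonal
  similarity \<open>diag(S, \<dots>, S)\<close> between \<open>(J, K\<^sub>X\<^sub>Y)\<close> and \<open>(J, K\<^sub>X\<^sub>'\<^sub>Y\<^sub>')\<close>.
  Conversely, write the pair similarity as an invertible \<open>S\<close> with \<open>J S = S J\<close> and
  \<open>K\<^sub>X\<^sub>Y S = S K\<^sub>X\<^sub>'\<^sub>Y\<^sub>'\<close>. Commuting with the shift \<open>J\<close> forces the first block column of
  \<open>S\<close> to vanish below the corner, the diagonal blocks \<open>S\<^sub>1\<^sub>1, S\<^sub>2\<^sub>2, S\<^sub>3\<^sub>3\<close> to equal
  \<open>S\<^sub>0\<^sub>0\<close>, and \<open>S\<^sub>2\<^sub>4, S\<^sub>4\<^sub>1, S\<^sub>4\<^sub>2\<close> to vanish; the identity block of \<open>K\<close> in position \<open>(4,3)\<close> then gives \<open>S\<^sub>4\<^sub>4 = S\<^sub>3\<^sub>3\<close>, and the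
  \<open>(0,2)\<close> and \<open>(0,4)\<close> blocks of \<open>K\<^sub>X\<^sub>Y S = S K\<^sub>X\<^sub>'\<^sub>Y\<^sub>'\<close> read \<open>X S\<^sub>0\<^sub>0 = S\<^sub>0\<^sub>0 X'\<close> and
  \<open>Y S\<^sub>0\<^sub>0 = S\<^sub>0\<^sub>0 Y'\<close>. The inverse of \<open>S\<close> also commutes with \<open>J\<close>, so the corner block of
  \<open>S S\<^sup>-\<^sup>1\<close> is \<open>S\<^sub>0\<^sub>0 (S\<^sup>-\<^sup>1)\<^sub>0\<^sub>0\<close>, and \<open>S\<^sub>0\<^sub>0\<close> is invertible. No field structure is needed.
\<close>

section \<open>Block matrices with \<open>5 \<times> 5\<close> blocks\<close>

definition block_of :: "nat \<Rightarrow> 'a mat \<Rightarrow> nat \<Rightarrow> nat \<Rightarrow> 'a mat" where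
  "block_of n M p q = mat n n (\<lambda>(i, j). M $$ (p * n + i, q * n + j))"

lemma block_of_carrier [simp]: "block_of n M p q \<in> carrier_mat n n"
  by (simp add: block_of_def)

lemma dim_block_of [simp]: "dim_row (block_of n M p q) = n" "dim_col (block_of n M p q) = n"
  by (simp_all add: block_of_def)

lemma block5_carrier [simp]: "block5 n B \<in> carrier_mat (5 * n) (5 * n)"
  by (simp add: block5_def)

lemma dim_block5 [simp]: "dim_row (block5 n B) = 5 * n" "dim_col (block5 n B) = 5 * n"
  by (simp_all add: block5_def)

lemma index_block5:
  "i < 5 * n \<Longrightarrow> j < 5 * n \<Longrightarrow> block5 n B $$ (i, j) = B (i div n) (j div n) $$ (i mod n, j mod n)"
  by (simp add: block5_def)

lemma block_index_less: "p < 5 \<Longrightarrow> i < n \<Longrightarrow> p * n + i < 5 * (n :: nat)"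
proof -
  assume "p < 5" "i < n"
  then have "p * n + i < Suc p * n" by simp
  also have "\<dots> \<le> 5 * n" using \<open>p < 5\<close> by (intro mult_le_mono1) simp
  finally show ?thesis .
qed

lemma block_of_block5:
  assumes "p < 5" "q < 5" "B p q \<in> carrier_mat n n"
  shows "block_of n (block5 n B) p q = B p q"
  by (rule eq_matI) (use assms in \<open>auto simp: block_of_def index_block5 block_index_less\<close>)

lemma block5_block_of:
  assumes "M \<in> carrier_mat (5 * n) (5 * n)"
  shows "block5 n (block_of n M) = M"
proof (rule eq_matI)
  fix i j assume "i < dim_row M" "j < dim_col M"
  with assms have ij: "i < 5 * n" "j < 5 * n" by auto
  then have "i div n < 5" "j div n < 5" by (simp_all add: less_mult_imp_div_less)
  with ij show "block5 n (block_of n M) $$ (i, j) = M $$ (i, j)"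
    by (simp add: index_block5 block_of_def)
qed (use assms in auto)

lemma block5_cong:
  assumes "\<And>p q. p < 5 \<Longrightarrow> q < 5 \<Longrightarrow> B p q = C p q"
  shows "block5 n B = block5 n C"
  by (rule eq_matI) (auto simp: index_block5 less_mult_imp_div_less assms)

lemma zero_mat_block5: "0\<^sub>m (5 * n) (5 * n) = block5 n (\<lambda>p q. 0\<^sub>m n n :: 'a :: zero mat)"
  by (rule eq_matI) (auto simp: index_block5)

lemma block_of_one_mat:
  assumes "p < 5" "q < 5"
  shows "block_of n (1\<^sub>m (5 * n)) p q = (if p = q then 1\<^sub>m n else (0\<^sub>m n n :: 'a :: {zero, one} mat))"
proof (rule eq_matI)
  fix i j assume "i < dim_row (if p = q then 1\<^sub>m n else (0\<^sub>m n n :: 'a mat))"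
    "j < dim_col (if p = q then 1\<^sub>m n else (0\<^sub>m n n :: 'a mat))"
  then have ij: "i < n" "j < n" by (auto split: if_splits)
  have "p * n + i = q * n + j \<longleftrightarrow> p = q \<and> i = j"
  proof
    assume "p * n + i = q * n + j"
    moreover have "(p * n + i) div n = p" "(q * n + j) div n = q" "(p * n + i) mod n = i" "(q * n + j) mod n = j"
      using ij by simp_all
    ultimately show "p = q \<and> i = j"
      by metis
  qed simp
  with ij assms show "block_of n (1\<^sub>m (5 * n)) p q $$ (i, j) = (if p = q then 1\<^sub>m n else 0\<^sub>m n n) $$ (i, j)"
    by (simp add: block_of_def block_index_less)
qed (simp_all add: block_of_def)

lemma sum_lessThan_mult_div_mod:
  "(\<Sum>k < m * n. g (k div n) (k mod n)) = (\<Sum>r < m. \<Sum>l < (n :: nat). g r l :: 'a :: comm_monoid_add)"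
proof -
  have "(\<Sum>k \<in> {r * n..<r * n + n}. g (k div n) (k mod n)) = (\<Sum>l < n. g r l)" for r
    using sum.shift_bounds_nat_ivl[of "\<lambda>k. g (k div n) (k mod n)" 0 "r * n" n]
    by (simp add: atLeast0LessThan add.commute)
  then show ?thesis
    using sum.nat_group[of "\<lambda>k. g (k div n) (k mod n)" n m] by simp
qed

lemma less_five_iff: "(p :: nat) < 5 \<longleftrightarrow> p \<in> {0, 1, 2, 3, 4}"
  by auto

lemma sum_lessThan_five: "(\<Sum>r < (5 :: nat). f r) = f 0 + f 1 + f 2 + f 3 + (f 4 :: 'a :: comm_monoid_add)"
  by (simp add: numeral_eq_Suc add.assoc)

definition block_mult5 :: "(nat \<Rightarrow> nat \<Rightarrow> 'a :: semiring_0 mat) \<Rightarrow> (nat \<Rightarrow> nat \<Rightarrow> 'a mat) \<Rightarrow> nat \<Rightarrow> nat \<Rightarrow> 'a mat" where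
  "block_mult5 B C p q = B p 0 * C 0 q + B p 1 * C 1 q + B p 2 * C 2 q + B p 3 * C 3 q + B p 4 * C 4 q"

lemma block_mult5_carrier:
  assumes "\<And>r. r < 5 \<Longrightarrow> B p r \<in> carrier_mat n n" "\<And>r. r < 5 \<Longrightarrow> C r q \<in> carrier_mat n n"
  shows "block_mult5 B C p q \<in> carrier_mat n n"
  unfolding block_mult5_def by (intro add_carrier_mat mult_carrier_mat[where n = n] assms) simp_all

lemma block5_mult:
  fixes B C :: "nat \<Rightarrow> nat \<Rightarrow> 'a :: semiring_0 mat"
  assumes "\<And>p q. p < 5 \<Longrightarrow> q < 5 \<Longrightarrow> B p q \<in> carrier_mat n n \<and> C p q \<in> carrier_mat n n"
  shows "block5 n B * block5 n C = block5 n (block_mult5 B C)"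
proof (rule eq_matI)
  fix i j assume "i < dim_row (block5 n (block_mult5 B C))" "j < dim_col (block5 n (block_mult5 B C))"
  then have ij: "i < 5 * n" "j < 5 * n" by auto
  define p q a b where "p = i div n" and "q = j div n" and "a = i mod n" and "b = j mod n"
  have pq: "p < 5" "q < 5" and ab: "a < n" "b < n"
    using ij by (auto simp: p_def q_def a_def b_def less_mult_imp_div_less)
  have blocks: "B p r \<in> carrier_mat n n" "C r q \<in> carrier_mat n n" if "r < 5" for r
    using assms pq that by auto
  have "(block5 n B * block5 n C) $$ (i, j) = (\<Sum>k < 5 * n. block5 n B $$ (i, k) * block5 n C $$ (k, j))"
    using ij by (simp add: scalar_prod_def atLeast0LessThan)
  also have "\<dots> = (\<Sum>k < 5 * n. B p (k div n) $$ (a, k mod n) * C (k div n) q $$ (k mod n, b))"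
    using ij by (intro sum.cong) (auto simp: index_block5 p_def q_def a_def b_def)
  also have "\<dots> = (\<Sum>r < 5. \<Sum>l < n. B p r $$ (a, l) * C r q $$ (l, b))"
    by (rule sum_lessThan_mult_div_mod)
  also have "\<dots> = (\<Sum>r < 5. (B p r * C r q) $$ (a, b))"
  proof (rule sum.cong)
    fix r :: nat assume "r \<in> {..<5}"
    with blocks have "dim_row (B p r) = n" "dim_col (B p r) = n" "dim_col (C r q) = n" "dim_row (C r q) = n"
      by auto
    with ab show "(\<Sum>l < n. B p r $$ (a, l) * C r q $$ (l, b)) = (B p r * C r q) $$ (a, b)"
      by (simp add: scalar_prod_def atLeast0LessThan)
  qed simp
  also have "\<dots> = block_mult5 B C p q $$ (a, b)"
  proof -
    have "dim_row (B p r) = n \<and> dim_col (C r q) = n" if "r < 5" for r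
      using blocks[OF that] by auto
    from this[of 0] this[of 1] this[of 2] this[of 3] this[of 4] ab show ?thesis
      unfolding sum_lessThan_five block_mult5_def by simp
  qed
  finally show "(block5 n B * block5 n C) $$ (i, j) = block5 n (block_mult5 B C) $$ (i, j)"
    using ij by (simp add: index_block5 p_def q_def a_def b_def)
qed auto

lemma block5_mult_eq:
  fixes B C :: "nat \<Rightarrow> nat \<Rightarrow> 'a :: semiring_0 mat"
  assumes "\<And>p q. B p q \<in> carrier_mat n n" "\<And>p q. C p q \<in> carrier_mat n n"
    and "\<And>p q. p < 5 \<Longrightarrow> q < 5 \<Longrightarrow> block_mult5 B C p q = D p q"
  shows "block5 n B * block5 n C = block5 n D"
  using block5_mult[of B n C] block5_cong[of "block_mult5 B C" D] assms by simp

lemma block_of_mult: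
  fixes A B :: "'a :: semiring_0 mat"
  assumes "A \<in> carrier_mat (5 * n) (5 * n)" "B \<in> carrier_mat (5 * n) (5 * n)" "p < 5" "q < 5"
  shows "block_of n (A * B) p q = block_mult5 (block_of n A) (block_of n B) p q"
proof -
  have "A * B = block5 n (block_mult5 (block_of n A) (block_of n B))"
    using block5_mult[of "block_of n A" n "block_of n B"] block5_block_of[OF assms(1)] block5_block_of[OF assms(2)]
    by simp
  then show ?thesis
    using assms(3,4) by (simp add: block_of_block5 block_mult5_carrier)
qed

lemma block_of_mult_first_column:
  fixes A B :: "'a :: semiring_0 mat"
  assumes "A \<in> carrier_mat (5 * n) (5 * n)" "B \<in> carrier_mat (5 * n) (5 * n)"
    and "\<And>r. 0 < r \<Longrightarrow> r < 5 \<Longrightarrow> block_of n B r 0 = 0\<^sub>m n n"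
  shows "block_of n (A * B) 0 0 = block_of n A 0 0 * block_of n B 0 0"
  using block_of_mult[OF assms(1,2), of 0 0] assms(3)[of 1] assms(3)[of 2] assms(3)[of 3] assms(3)[of 4]
  by (simp add: block_mult5_def mult_carrier_mat[of _ n n _ n])

lemma block_mult5_intertwining:
  fixes A A' S :: "'a :: semiring_0 mat"
  assumes "A \<in> carrier_mat (5 * n) (5 * n)" "A' \<in> carrier_mat (5 * n) (5 * n)" "S \<in> carrier_mat (5 * n) (5 * n)"
    and "A * S = S * A'" "p < 5" "q < 5"
  shows "block_mult5 (block_of n A) (block_of n S) p q = block_mult5 (block_of n S) (block_of n A') p q"
  using block_of_mult[OF assms(1,3,5,6)] block_of_mult[OF assms(3,2,5,6)] assms(4) by simp

section \<open>Similarity of pairs via intertwiners\<close>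

lemma conjugate_eq_iff_intertwines:
  fixes A A' S T :: "'a :: semiring_1 mat"
  assumes "A \<in> carrier_mat m m" "A' \<in> carrier_mat m m" "S \<in> carrier_mat m m" "T \<in> carrier_mat m m"
    and "S * T = 1\<^sub>m m" "T * S = 1\<^sub>m m"
  shows "T * A * S = A' \<longleftrightarrow> A * S = S * A'"
proof
  assume "T * A * S = A'"
  then have "S * A' = (S * T) * (A * S)"
    using assms(1-4) by (simp add: assoc_mult_mat[of _ m m _ m _ m] mult_carrier_mat[of _ m m _ m])
  also have "\<dots> = A * S"
    using assms by (simp only: assms(5) left_mult_one_mat[OF mult_carrier_mat[OF assms(1,3)]])
  finally show "A * S = S * A'" ..
next
  assume "A * S = S * A'"
  then have "T * A * S = (T * S) * A'"
    using assms(1-4) by (simp add: assoc_mult_mat[of _ m m _ m _ m] mult_carrier_mat[of _ m m _ m])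
  also have "\<dots> = A'"
    using assms(2,6) by simp
  finally show "T * A * S = A'" .
qed

lemma similar_pair_iff_intertwiner:
  fixes M N M' N' :: "'a :: semiring_1 mat"
  assumes "M \<in> carrier_mat m m" "N \<in> carrier_mat m m" "M' \<in> carrier_mat m m" "N' \<in> carrier_mat m m"
  shows "similar_pair m M N M' N' \<longleftrightarrow>
    (\<exists>S T. S \<in> carrier_mat m m \<and> T \<in> carrier_mat m m \<and> S * T = 1\<^sub>m m \<and> T * S = 1\<^sub>m m \<and>
      M * S = S * M' \<and> N * S = S * N')"
  unfolding similar_pair_def using conjugate_eq_iff_intertwines assms by meson

lemma commute_inverse:
  fixes A S T :: "'a :: semiring_1 mat"
  assumes "A \<in> carrier_mat m m" "S \<in> carrier_mat m m" "T \<in> carrier_mat m m"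
    and "S * T = 1\<^sub>m m" "T * S = 1\<^sub>m m" "A * S = S * A"
  shows "A * T = T * A"
proof -
  have "T * A * S = A"
    using conjugate_eq_iff_intertwines[of A m A S T] assms by blast
  then have "S * A * T = S * (T * A * S) * T"
    by simp
  also have "\<dots> = (S * T) * A * (S * T)"
    using assms(1-3) by (simp add: assoc_mult_mat[of _ m m _ m _ m] mult_carrier_mat[of _ m m _ m])
  also have "\<dots> = A"
    using assms by simp
  finally show ?thesis
    using conjugate_eq_iff_intertwines[of A m A T S] assms by simp
qed

definition J_blocks :: "nat \<Rightarrow> nat \<Rightarrow> nat \<Rightarrow> 'a :: {zero, one} mat" where
  "J_blocks n p q = (if (p, q) \<in> {(0, 1), (1, 2), (2, 3)} then 1\<^sub>m n else 0\<^sub>m n n)"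

definition K_blocks :: "nat \<Rightarrow> 'a :: {zero, one} mat \<Rightarrow> 'a mat \<Rightarrow> nat \<Rightarrow> nat \<Rightarrow> 'a mat" where
  "K_blocks n X Y p q =
    (if (p, q) = (0, 2) then X else
     if (p, q) = (0, 4) then Y else
     if (p, q) = (1, 3) then X else
     if (p, q) = (4, 3) then 1\<^sub>m n else 0\<^sub>m n n)"

lemma Jmat_eq_block5: "Jmat n = block5 n (J_blocks n)"
  unfolding Jmat_def J_blocks_def ..

lemma Kmat_eq_block5: "Kmat n X Y = block5 n (K_blocks n X Y)"
  unfolding Kmat_def K_blocks_def ..

lemma J_blocks_carrier [simp]: "J_blocks n p q \<in> carrier_mat n n"
  by (simp add: J_blocks_def)

lemma K_blocks_carrier [simp]:
  "X \<in> carrier_mat n n \<Longrightarrow> Y \<in> carrier_mat n n \<Longrightarrow> K_blocks n X Y p q \<in> carrier_mat n n"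
  by (simp add: K_blocks_def)

lemma Jmat_carrier [simp]: "Jmat n \<in> carrier_mat (5 * n) (5 * n)"
  by (simp add: Jmat_eq_block5)

lemma Kmat_carrier [simp]: "Kmat n X Y \<in> carrier_mat (5 * n) (5 * n)"
  by (simp add: Kmat_eq_block5)

lemma block_of_Jmat: "p < 5 \<Longrightarrow> q < 5 \<Longrightarrow> block_of n (Jmat n) p q = J_blocks n p q"
  by (simp add: Jmat_eq_block5 block_of_block5)

lemma block_of_Kmat:
  "X \<in> carrier_mat n n \<Longrightarrow> Y \<in> carrier_mat n n \<Longrightarrow> p < 5 \<Longrightarrow> q < 5 \<Longrightarrow>
    block_of n (Kmat n X Y) p q = K_blocks n X Y p q"
  by (simp add: Kmat_eq_block5 block_of_block5)

lemma Jmat_pow_4: "(Jmat n :: 'a :: comm_ring_1 mat) ^\<^sub>m 4 = 0\<^sub>m (5 * n) (5 * n)"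
proof -
  let ?E = "\<lambda>S p q. if (p, q) \<in> S then 1\<^sub>m n else 0\<^sub>m n n :: 'a mat"
  have "Jmat n ^\<^sub>m 4 = block5 n (J_blocks n) * block5 n (J_blocks n) * block5 n (J_blocks n) * block5 n (J_blocks n)"
    by (simp add: numeral_eq_Suc Jmat_eq_block5)
  also have "block5 n (J_blocks n) * block5 n (J_blocks n) = block5 n (?E {(0, 2), (1, 3)})"
    by (rule block5_mult_eq) (auto simp: less_five_iff J_blocks_def block_mult5_def)
  also have "\<dots> * block5 n (J_blocks n) = block5 n (?E {(0, 3)})"
    by (rule block5_mult_eq) (auto simp: less_five_iff J_blocks_def block_mult5_def)
  also have "\<dots> * block5 n (J_blocks n) = block5 n (?E {})"
    by (rule block5_mult_eq) (auto simp: less_five_iff J_blocks_def block_mult5_def)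
  finally show ?thesis
    by (simp add: zero_mat_block5)
qed

lemma Kmat_pow_3:
  fixes X Y :: "'a :: comm_ring_1 mat"
  assumes "X \<in> carrier_mat n n" "Y \<in> carrier_mat n n"
  shows "Kmat n X Y ^\<^sub>m 3 = 0\<^sub>m (5 * n) (5 * n)"
proof -
  let ?K = "block5 n (K_blocks n X Y)"
  have "Kmat n X Y ^\<^sub>m 3 = ?K * ?K * ?K"
    by (simp add: numeral_eq_Suc Kmat_eq_block5)
  also have "?K * ?K = block5 n (\<lambda>p q. if (p, q) = (0, 3) then Y else 0\<^sub>m n n)"
    by (rule block5_mult_eq) (use assms in \<open>auto simp: less_five_iff K_blocks_def block_mult5_def\<close>)
  also have "\<dots> * ?K = block5 n (\<lambda>p q. 0\<^sub>m n n)"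
    by (rule block5_mult_eq) (use assms in \<open>auto simp: less_five_iff K_blocks_def block_mult5_def\<close>)
  finally show ?thesis
    by (simp add: zero_mat_block5)
qed

lemma Jmat_Kmat_commute:
  fixes X Y :: "'a :: comm_ring_1 mat"
  assumes "X \<in> carrier_mat n n" "Y \<in> carrier_mat n n"
  shows "Jmat n * Kmat n X Y = Kmat n X Y * Jmat n"
proof -
  let ?XE = "block5 n (\<lambda>p q. if (p, q) = (0, 3) then X else 0\<^sub>m n n)"
  have "Jmat n * Kmat n X Y = ?XE"
    unfolding Jmat_eq_block5 Kmat_eq_block5
    by (rule block5_mult_eq) (use assms in \<open>auto simp: less_five_iff J_blocks_def K_blocks_def block_mult5_def\<close>)
  moreover have "Kmat n X Y * Jmat n = ?XE"
    unfolding Jmat_eq_block5 Kmat_eq_block5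
    by (rule block5_mult_eq) (use assms in \<open>auto simp: less_five_iff J_blocks_def K_blocks_def block_mult5_def\<close>)
  ultimately show ?thesis
    by simp
qed

section \<open>Block-diagonal embedding of a similarity\<close>

definition block_diag5 :: "nat \<Rightarrow> 'a :: zero mat \<Rightarrow> 'a mat" where
  "block_diag5 n A = block5 n (\<lambda>p q. if p = q then A else 0\<^sub>m n n)"

lemma block_diag5_mult_left:
  fixes A :: "'a :: semiring_0 mat"
  assumes "A \<in> carrier_mat n n" "\<And>p q. B p q \<in> carrier_mat n n"
  shows "block_diag5 n A * block5 n B = block5 n (\<lambda>p q. A * B p q)"
  unfolding block_diag5_def
proof (rule block5_mult_eq)
  fix p q :: nat assume "p < 5" "q < 5"
  moreover have "dim_row (B p q) = n" "dim_col (B p q) = n" for p q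
    using assms(2)[of p q] by auto
  ultimately show "block_mult5 (\<lambda>p q. if p = q then A else 0\<^sub>m n n) B p q = A * B p q"
    using assms by (auto simp: less_five_iff block_mult5_def)
qed (use assms in auto)

lemma block_diag5_mult_right:
  fixes A :: "'a :: semiring_0 mat"
  assumes "A \<in> carrier_mat n n" "\<And>p q. B p q \<in> carrier_mat n n"
  shows "block5 n B * block_diag5 n A = block5 n (\<lambda>p q. B p q * A)"
  unfolding block_diag5_def
proof (rule block5_mult_eq)
  fix p q :: nat assume "p < 5" "q < 5"
  moreover have "dim_row (B p q) = n" "dim_col (B p q) = n" for p q
    using assms(2)[of p q] by auto
  ultimately show "block_mult5 B (\<lambda>p q. if p = q then A else 0\<^sub>m n n) p q = B p q * A"
    using assms by (auto simp: less_five_iff block_mult5_def)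
qed (use assms in auto)

lemma block_diag5_one: "block_diag5 n (1\<^sub>m n) = (1\<^sub>m (5 * n) :: 'a :: {zero, one} mat)"
proof -
  have "block_diag5 n (1\<^sub>m n) = block5 n (block_of n (1\<^sub>m (5 * n) :: 'a mat))"
    unfolding block_diag5_def by (rule block5_cong) (simp add: block_of_one_mat)
  then show ?thesis
    by (simp add: block5_block_of)
qed

lemma block_diag5_mult:
  fixes A B :: "'a :: semiring_1 mat"
  assumes "A \<in> carrier_mat n n" "B \<in> carrier_mat n n"
  shows "block_diag5 n A * block_diag5 n B = block_diag5 n (A * B)"
  using block_diag5_mult_left[OF assms(1), of "\<lambda>p q. if p = q then B else 0\<^sub>m n n"] assms
  by (auto simp: block_diag5_def[of n B] block_diag5_def[of n "A * B"] intro!: block5_cong)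

lemma Jmat_block_diag5_commute:
  fixes S :: "'a :: comm_ring_1 mat"
  assumes "S \<in> carrier_mat n n"
  shows "Jmat n * block_diag5 n S = block_diag5 n S * Jmat n"
proof -
  have "J_blocks n p q * S = S * J_blocks n p q" for p q
    using assms by (simp add: J_blocks_def)
  then show ?thesis
    unfolding Jmat_eq_block5 using assms by (simp add: block_diag5_mult_left block_diag5_mult_right)
qed

lemma Kmat_block_diag5_intertwines:
  fixes X Y X' Y' S :: "'a :: comm_ring_1 mat"
  assumes "X \<in> carrier_mat n n" "Y \<in> carrier_mat n n" "X' \<in> carrier_mat n n" "Y' \<in> carrier_mat n n"
    and "S \<in> carrier_mat n n" "X * S = S * X'" "Y * S = S * Y'"
  shows "Kmat n X Y * block_diag5 n S = block_diag5 n S * Kmat n X' Y'"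
proof -
  have "K_blocks n X Y p q * S = S * K_blocks n X' Y' p q" for p q
    using assms by (simp add: K_blocks_def)
  then show ?thesis
    unfolding Kmat_eq_block5 using assms by (simp add: block_diag5_mult_left block_diag5_mult_right)
qed

lemma similar_pair_block_embedding:
  fixes X Y X' Y' :: "'a :: comm_ring_1 mat"
  assumes "X \<in> carrier_mat n n" "Y \<in> carrier_mat n n" "X' \<in> carrier_mat n n" "Y' \<in> carrier_mat n n"
    and "similar_pair n X Y X' Y'"
  shows "similar_pair (5 * n) (Jmat n) (Kmat n X Y) (Jmat n) (Kmat n X' Y')"
proof -
  obtain S T where ST: "S \<in> carrier_mat n n" "T \<in> carrier_mat n n" "S * T = 1\<^sub>m n" "T * S = 1\<^sub>m n"
    and XY: "X * S = S * X'" "Y * S = S * Y'"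
    using assms(5) unfolding similar_pair_iff_intertwiner[OF assms(1-4)] by blast
  have "block_diag5 n S * block_diag5 n T = 1\<^sub>m (5 * n)" "block_diag5 n T * block_diag5 n S = 1\<^sub>m (5 * n)"
    using ST by (simp_all add: block_diag5_mult block_diag5_one)
  moreover have "block_diag5 n A \<in> carrier_mat (5 * n) (5 * n)" for A :: "'a mat"
    by (simp add: block_diag5_def)
  ultimately show ?thesis
    unfolding similar_pair_iff_intertwiner[OF Jmat_carrier Kmat_carrier Jmat_carrier Kmat_carrier]
    using Jmat_block_diag5_commute[OF ST(1)] Kmat_block_diag5_intertwines[OF assms(1-4) ST(1) XY]
    by blast
qed

section \<open>Recovering a similarity from the corner block\<close>

lemma Jmat_commutant_blocks:
  fixes S :: "'a :: comm_ring_1 mat"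
  assumes "S \<in> carrier_mat (5 * n) (5 * n)" "Jmat n * S = S * Jmat n"
  shows "\<And>r. 0 < r \<Longrightarrow> r < 5 \<Longrightarrow> block_of n S r 0 = 0\<^sub>m n n"
    and "block_of n S 1 1 = block_of n S 0 0" "block_of n S 2 2 = block_of n S 0 0"
      "block_of n S 3 3 = block_of n S 0 0"
    and "block_of n S 4 1 = 0\<^sub>m n n" "block_of n S 4 2 = 0\<^sub>m n n" "block_of n S 2 4 = 0\<^sub>m n n"
proof -
  have eq: "block_mult5 (J_blocks n) (block_of n S) p q = block_mult5 (block_of n S) (J_blocks n) p q"
    if "p < 5" "q < 5" for p q
    using block_mult5_intertwining[OF Jmat_carrier Jmat_carrier assms that] that
    by (simp add: block_mult5_def block_of_Jmat)
  have "block_of n S 1 0 = 0\<^sub>m n n" "block_of n S 2 0 = 0\<^sub>m n n" "block_of n S 3 0 = 0\<^sub>m n n"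
    "block_of n S 4 0 = 0\<^sub>m n n"
    using eq[of 0 0] eq[of 1 0] eq[of 2 0] eq[of 4 1] by (simp_all add: J_blocks_def block_mult5_def)
  then show "\<And>r. 0 < r \<Longrightarrow> r < 5 \<Longrightarrow> block_of n S r 0 = 0\<^sub>m n n"
    by (auto simp: less_five_iff)
  have "block_of n S 1 1 = block_of n S 0 0" "block_of n S 2 2 = block_of n S 1 1"
    "block_of n S 3 3 = block_of n S 2 2"
    using eq[of 0 1] eq[of 1 2] eq[of 2 3] by (simp_all add: J_blocks_def block_mult5_def)
  then show "block_of n S 1 1 = block_of n S 0 0" "block_of n S 2 2 = block_of n S 0 0"
    "block_of n S 3 3 = block_of n S 0 0"
    by simp_all
  show "block_of n S 4 1 = 0\<^sub>m n n"
    using eq[of 4 2] by (simp add: J_blocks_def block_mult5_def)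
  show "block_of n S 4 2 = 0\<^sub>m n n"
    using eq[of 4 3] by (simp add: J_blocks_def block_mult5_def)
  show "block_of n S 2 4 = 0\<^sub>m n n"
    using eq[of 1 4] by (simp add: J_blocks_def block_mult5_def)
qed

lemma Kmat_intertwiner_corner:
  fixes X Y X' Y' S :: "'a :: comm_ring_1 mat"
  assumes "X \<in> carrier_mat n n" "Y \<in> carrier_mat n n" "X' \<in> carrier_mat n n" "Y' \<in> carrier_mat n n"
    and S: "S \<in> carrier_mat (5 * n) (5 * n)" "Jmat n * S = S * Jmat n"
    and K: "Kmat n X Y * S = S * Kmat n X' Y'"
  shows "X * block_of n S 0 0 = block_of n S 0 0 * X'" "Y * block_of n S 0 0 = block_of n S 0 0 * Y'"
proof -
  have eq: "block_mult5 (K_blocks n X Y) (block_of n S) p q = block_mult5 (block_of n S) (K_blocks n X' Y') p q"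
    if "p < 5" "q < 5" for p q
    using block_mult5_intertwining[OF Kmat_carrier Kmat_carrier S(1) K that] that assms(1-4)
    by (simp add: block_mult5_def block_of_Kmat)
  note J = Jmat_commutant_blocks[OF S]
  have dims: "dim_row X = n" "dim_col X = n" "dim_row Y = n" "dim_col Y = n"
    "dim_row X' = n" "dim_col X' = n" "dim_row Y' = n" "dim_col Y' = n"
    using assms(1-4) by auto
  have "block_of n S 4 4 = block_of n S 3 3"
    using eq[of 4 3] J(5) dims by (simp add: K_blocks_def block_mult5_def)
  with J(4) have "block_of n S 4 4 = block_of n S 0 0"
    by simp
  with eq[of 0 4] J(1)[of 1] J(1)[of 2] J(1)[of 3] J(1)[of 4] J(7) dims
  show "Y * block_of n S 0 0 = block_of n S 0 0 * Y'"
    using assms(1-4) by (simp add: K_blocks_def block_mult5_def mult_carrier_mat[of _ n n _ n])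
  from eq[of 0 2] J(1)[of 1] J(1)[of 2] J(1)[of 3] J(1)[of 4] J(3,6) dims
  show "X * block_of n S 0 0 = block_of n S 0 0 * X'"
    using assms(1-4) by (simp add: K_blocks_def block_mult5_def mult_carrier_mat[of _ n n _ n])
qed

lemma similar_pair_of_block_embedding:
  fixes X Y X' Y' :: "'a :: comm_ring_1 mat"
  assumes XY: "X \<in> carrier_mat n n" "Y \<in> carrier_mat n n" "X' \<in> carrier_mat n n" "Y' \<in> carrier_mat n n"
    and "similar_pair (5 * n) (Jmat n) (Kmat n X Y) (Jmat n) (Kmat n X' Y')"
  shows "similar_pair n X Y X' Y'"
proof -
  obtain S T where S: "S \<in> carrier_mat (5 * n) (5 * n)" and T: "T \<in> carrier_mat (5 * n) (5 * n)"
    and inv: "S * T = 1\<^sub>m (5 * n)" "T * S = 1\<^sub>m (5 * n)"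
    and JS: "Jmat n * S = S * Jmat n" and KS: "Kmat n X Y * S = S * Kmat n X' Y'"
    using assms(5)
    unfolding similar_pair_iff_intertwiner[OF Jmat_carrier Kmat_carrier Jmat_carrier Kmat_carrier] by blast
  have JT: "Jmat n * T = T * Jmat n"
    using commute_inverse[OF Jmat_carrier S T inv JS] .
  have "block_of n S 0 0 * block_of n T 0 0 = block_of n (S * T) 0 0"
    using block_of_mult_first_column[OF S T Jmat_commutant_blocks(1)[OF T JT]] by simp
  also have "\<dots> = 1\<^sub>m n"
    using inv(1) by (simp add: block_of_one_mat)
  finally have ST: "block_of n S 0 0 * block_of n T 0 0 = 1\<^sub>m n" .
  have "block_of n T 0 0 * block_of n S 0 0 = block_of n (T * S) 0 0"
    using block_of_mult_first_column[OF T S Jmat_commutant_blocks(1)[OF S JS]] by simp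
  also have "\<dots> = 1\<^sub>m n"
    using inv(2) by (simp add: block_of_one_mat)
  finally have TS: "block_of n T 0 0 * block_of n S 0 0 = 1\<^sub>m n" .
  show ?thesis
    unfolding similar_pair_iff_intertwiner[OF XY]
    using block_of_carrier ST TS Kmat_intertwiner_corner[OF XY S JS KS] by blast
qed

theorem mainTheorem3:
  fixes n :: nat
  assumes "n \<ge> 1"
  shows "(\<forall>X Y :: 'a :: field mat. X \<in> carrier_mat n n \<longrightarrow> Y \<in> carrier_mat n n \<longrightarrow>
            nilpotent_mat (Jmat n :: 'a mat) \<and> nilpotent_mat (Kmat n X Y) \<and>
            Jmat n * Kmat n X Y = Kmat n X Y * Jmat n) \<and>
         (\<forall>X Y X' Y' :: 'a mat. X \<in> carrier_mat n n \<longrightarrow> Y \<in> carrier_mat n n \<longrightarrow>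
            X' \<in> carrier_mat n n \<longrightarrow> Y' \<in> carrier_mat n n \<longrightarrow>
            (similar_pair n X Y X' Y' \<longleftrightarrow>
             similar_pair (5*n) (Jmat n) (Kmat n X Y) (Jmat n) (Kmat n X' Y')))"
proof (intro conjI allI impI)
  fix X Y :: "'a mat" assume XY: "X \<in> carrier_mat n n" "Y \<in> carrier_mat n n"
  show "nilpotent_mat (Jmat n :: 'a mat)"
    unfolding nilpotent_mat_def using Jmat_pow_4 carrier_matD[OF Jmat_carrier] by metis
  show "nilpotent_mat (Kmat n X Y)"
    unfolding nilpotent_mat_def using Kmat_pow_3[OF XY] carrier_matD[OF Kmat_carrier] by metis
  show "Jmat n * Kmat n X Y = Kmat n X Y * Jmat n"
    using Jmat_Kmat_commute[OF XY] .
next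
  fix X Y X' Y' :: "'a mat"
  assume XY: "X \<in> carrier_mat n n" "Y \<in> carrier_mat n n" "X' \<in> carrier_mat n n" "Y' \<in> carrier_mat n n"
  show "similar_pair n X Y X' Y' \<longleftrightarrow> similar_pair (5*n) (Jmat n) (Kmat n X Y) (Jmat n) (Kmat n X' Y')"
    using similar_pair_block_embedding[OF XY] similar_pair_of_block_embedding[OF XY] by blast
qed

end
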